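(* Let $(\mathfrak n,I,g)$ be a $\mathfrak k$-nilpotent triple with $\mathfrak k$ abelian, and $\mathsf N$ the corresponding simply-connected Lie group (with $I$ and $g$ extended to left-invariant tensor fields). Then $(\mathsf N,g)$ admits a metric connection $\nabla$ with parallel torsion and parallel curvature, whose torsion $T$ is totally skew-symmetric, and which satisfies $\nabla I=0$. Moreover, every central left-invariant vector field $U\in\mathfrak z(\mathfrak n)$ is $\nabla$-parallel, and $$g(T(X,Y),Z)=-g([X,Y],Z)-g([Y,Z],X)-g([Z,X],Y)$$ for all left-invariant vector fields $X,Y,Z\in\mathfrak n$.
   Context: $\mathfrak k$-nilpotent triple: given a compact Lie algebra $\mathfrak k$ with bi-invariant scalar product $\langle\cdot,\cdot\rangle_{\mathfrak k}$ and a finite-dimensional unitary representation $\varphi:\mathfrak k\to\mathfrak u(V,I,\langle\cdot,\cdot\rangle_V)$ without trivial submodules, it is $(\mathfrak n,I,g)$ where $\mathfrak n=\mathfrak k+V$ with only non-zero brackets $[v_1,v_2]\in\mathfrak k$ given by $\langle[v_1,v_2],K\rangle_{\mathfrak k}=\langle\varphi(K)v_1,v_2\rangle_V$ ($v_i\in V$, $K\in\mathfrak k$), $I$ is the complex structure on $V$ (the transverse complex structure, regarded as an endomorphism of $\mathfrak n$ vanishing on $\mathfrak k$), and $g=\langle\cdot,\cdot\rangle_{\mathfrak k}\oplus\langle\cdot,\cdot\rangle_V$. The centre of $\mathfrak n$ is $\mathfrak z(\mathfrak n)=\mathfrak k$. *)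

theory Defs
  imports "HOL-Analysis.Analysis"
begin

text \<open>The abelian compact Lie algebra k (with its bi-invariant scalar product) is modelled
by a Euclidean space type 'k (zero bracket; every scalar product is bi-invariant);
the unitary module (V, I, <,>_V) by a Euclidean space type 'v with an orthogonal
complex structure J; the representation by phi :: 'k => 'v => 'v.\<close>

definition knil_abelian_datum :: "('k::euclidean_space \<Rightarrow> 'v::euclidean_space \<Rightarrow> 'v) \<Rightarrow> ('v \<Rightarrow> 'v) \<Rightarrow> bool" where
  "knil_abelian_datum \<phi> J \<longleftrightarrow>
     linear J \<and> (\<forall>v. J (J v) = - v) \<and> (\<forall>v w. J v \<bullet> J w = v \<bullet> w) \<and>
     (\<forall>K. linear (\<phi> K)) \<and> (\<forall>v. linear (\<lambda>K. \<phi> K v)) \<and>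
     (\<forall>K v w. \<phi> K v \<bullet> w = - (v \<bullet> \<phi> K w)) \<and>
     (\<forall>K v. \<phi> K (J v) = J (\<phi> K v)) \<and>
     (\<forall>K L v. \<phi> K (\<phi> L v) = \<phi> L (\<phi> K v)) \<and>
     (\<forall>v. (\<forall>K. \<phi> K v = 0) \<longrightarrow> v = 0)"

text \<open>The bracket V x V -> k defined by <[v,w],K> = <phi(K) v, w>.\<close>
definition vbr :: "('k::euclidean_space \<Rightarrow> 'v::euclidean_space \<Rightarrow> 'v) \<Rightarrow> 'v \<Rightarrow> 'v \<Rightarrow> 'k" where
  "vbr \<phi> v w = (\<Sum>b\<in>Basis. (\<phi> b v \<bullet> w) *\<^sub>R b)"

text \<open>n = k + V, realised as the product type 'k \<times> 'v, whose inner product is the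
orthogonal sum g.\<close>
definition nbr :: "('k::euclidean_space \<Rightarrow> 'v::euclidean_space \<Rightarrow> 'v) \<Rightarrow> 'k \<times> 'v \<Rightarrow> 'k \<times> 'v \<Rightarrow> 'k \<times> 'v" where
  "nbr \<phi> X Y = (vbr \<phi> (snd X) (snd Y), 0)"

definition nI :: "('v \<Rightarrow> 'v) \<Rightarrow> 'k::euclidean_space \<times> 'v::euclidean_space \<Rightarrow> 'k \<times> 'v" where
  "nI J X = (0, J (snd X))"

definition centre :: "('a \<Rightarrow> 'a \<Rightarrow> 'a::real_vector) \<Rightarrow> 'a set" where
  "centre br = {U. \<forall>X. br U X = 0}"

text \<open>A left-invariant connection on the simply connected Lie group N is given by a
bilinear map L : n x n -> n, nabla_X Y = L X Y for left-invariant X, Y.\<close>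

definition torsion :: "('a \<Rightarrow> 'a \<Rightarrow> 'a) \<Rightarrow> ('a \<Rightarrow> 'a \<Rightarrow> 'a::real_vector) \<Rightarrow> 'a \<Rightarrow> 'a \<Rightarrow> 'a" where
  "torsion br L X Y = L X Y - L Y X - br X Y"

definition curvature :: "('a \<Rightarrow> 'a \<Rightarrow> 'a) \<Rightarrow> ('a \<Rightarrow> 'a \<Rightarrow> 'a::real_vector) \<Rightarrow> 'a \<Rightarrow> 'a \<Rightarrow> 'a \<Rightarrow> 'a" where
  "curvature br L X Y Z = L X (L Y Z) - L Y (L X Z) - L (br X Y) Z"

definition metric_conn :: "('a \<Rightarrow> 'a \<Rightarrow> 'a::real_inner) \<Rightarrow> bool" where
  "metric_conn L \<longleftrightarrow> (\<forall>X Y Z. L X Y \<bullet> Z + Y \<bullet> L X Z = 0)"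

definition parallel21 :: "('a \<Rightarrow> 'a \<Rightarrow> 'a::real_vector) \<Rightarrow> ('a \<Rightarrow> 'a \<Rightarrow> 'a) \<Rightarrow> bool" where
  "parallel21 L T \<longleftrightarrow> (\<forall>W X Y. L W (T X Y) - T (L W X) Y - T X (L W Y) = 0)"

definition parallel31 :: "('a \<Rightarrow> 'a \<Rightarrow> 'a::real_vector) \<Rightarrow> ('a \<Rightarrow> 'a \<Rightarrow> 'a \<Rightarrow> 'a) \<Rightarrow> bool" where
  "parallel31 L R \<longleftrightarrow> (\<forall>W X Y Z. L W (R X Y Z) - R (L W X) Y Z - R X (L W Y) Z - R X Y (L W Z) = 0)"

definition parallel11 :: "('a \<Rightarrow> 'a \<Rightarrow> 'a::real_vector) \<Rightarrow> ('a \<Rightarrow> 'a) \<Rightarrow> bool" where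
  "parallel11 L A \<longleftrightarrow> (\<forall>X Y. L X (A Y) = A (L X Y))"

definition totally_skew :: "('a \<Rightarrow> 'a \<Rightarrow> 'a::real_inner) \<Rightarrow> bool" where
  "totally_skew T \<longleftrightarrow> (\<forall>X Y Z. T X Y \<bullet> Z = - (T X Z \<bullet> Y)) \<and> (\<forall>X Y. T X Y = - T Y X)"

end

theory Submission
  imports Defs
begin

text \<open>For X = (K, x) and Y = (K', y) in n = k + V take the connection with Nomizu map
  L X Y = (0, -phi(K) y): it is metric because phi(K) is skew, commutes with I because
  phi(K) is complex linear, and annihilates the centre k. Its torsion is
  T(X, Y) = (-[x, y], phi(K') x - phi(K) y), whose inner product with Z is the cyclic sum
  of brackets, so T is totally skew. Its curvature is R(X, Y) Z = (0, phi([x, y]) z).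
  Since k is abelian, each L X acts as phi(K), which commutes with phi and is a derivation
  of the bracket [x, y] (skewness plus commutativity of phi), so T and R are parallel.\<close>

definition knil_conn :: "('k::euclidean_space \<Rightarrow> 'v::euclidean_space \<Rightarrow> 'v) \<Rightarrow> 'k \<times> 'v \<Rightarrow> 'k \<times> 'v \<Rightarrow> 'k \<times> 'v" where
  "knil_conn \<phi> X Y = (0, - \<phi> (fst X) (snd Y))"

lemma inner_vbr:
  assumes "linear (\<lambda>K. \<phi> K v)"
  shows "vbr \<phi> v w \<bullet> K = \<phi> K v \<bullet> w"
proof -
  have "\<phi> K v = \<phi> (\<Sum>b\<in>Basis. (K \<bullet> b) *\<^sub>R b) v"
    by (simp add: euclidean_representation)
  also have "\<dots> = (\<Sum>b\<in>Basis. (K \<bullet> b) *\<^sub>R \<phi> b v)"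
    using linear_sum[OF assms, of "\<lambda>b. (K \<bullet> b) *\<^sub>R b" Basis] by (simp add: linear_scale[OF assms])
  finally have "\<phi> K v \<bullet> w = (\<Sum>b\<in>Basis. (K \<bullet> b) * (\<phi> b v \<bullet> w))"
    by (simp add: inner_sum_left)
  moreover have "vbr \<phi> v w \<bullet> K = (\<Sum>b\<in>Basis. (\<phi> b v \<bullet> w) * (b \<bullet> K))"
    by (simp add: vbr_def inner_sum_left)
  ultimately show ?thesis
    by (simp add: inner_commute mult.commute)
qed

lemma inner_eqI: "(\<And>z. x \<bullet> z = y \<bullet> z) \<Longrightarrow> x = y"
  using vector_eq_rdot by blast

lemma torsion_knil_conn:
  "torsion (nbr \<phi>) (knil_conn \<phi>) X Y =
     (- vbr \<phi> (snd X) (snd Y), \<phi> (fst Y) (snd X) - \<phi> (fst X) (snd Y))"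
  by (simp add: torsion_def knil_conn_def nbr_def)

context
  fixes \<phi> :: "'k::euclidean_space \<Rightarrow> 'v::euclidean_space \<Rightarrow> 'v" and J :: "'v \<Rightarrow> 'v"
  assumes datum: "knil_abelian_datum \<phi> J"
begin

lemma linear_J: "linear J"
  and linear_phi: "linear (\<phi> K)"
  and linear_phi_left: "linear (\<lambda>K. \<phi> K v)"
  and phi_skew: "\<phi> K v \<bullet> w = - (v \<bullet> \<phi> K w)"
  and phi_J: "\<phi> K (J v) = J (\<phi> K v)"
  and phi_commute: "\<phi> K (\<phi> M v) = \<phi> M (\<phi> K v)"
  and phi_faithful_pointwise: "(\<And>K. \<phi> K v = 0) \<Longrightarrow> v = 0"
  using datum unfolding knil_abelian_datum_def by blast+

lemma phi_simps [simp]: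
  "\<phi> 0 v = 0" "\<phi> K 0 = 0" "\<phi> K (a + b) = \<phi> K a + \<phi> K b" "\<phi> K (a - b) = \<phi> K a - \<phi> K b"
  "\<phi> K (- a) = - \<phi> K a" "\<phi> K (c *\<^sub>R a) = c *\<^sub>R \<phi> K a"
  "\<phi> (K + M) v = \<phi> K v + \<phi> M v" "\<phi> (c *\<^sub>R K) v = c *\<^sub>R \<phi> K v" "\<phi> (- K) v = - \<phi> K v"
  using linear_0[OF linear_phi_left[of v]] linear_0[OF linear_phi[of K]] linear_add[OF linear_phi_left[of v]]
    linear_scale[OF linear_phi_left[of v]] linear_neg[OF linear_phi_left[of v]]
    linear_add[OF linear_phi[of K]] linear_diff[OF linear_phi[of K]]
    linear_neg[OF linear_phi[of K]] linear_scale[OF linear_phi[of K]]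
  by simp_all

lemma inner_vbr_phi: "vbr \<phi> v w \<bullet> K = \<phi> K v \<bullet> w"
  using inner_vbr[OF linear_phi_left] .

lemma vbr_minus [simp]: "vbr \<phi> (- x) y = - vbr \<phi> x y" "vbr \<phi> x (- y) = - vbr \<phi> x y"
  by (rule inner_eqI, simp add: inner_vbr_phi)+

lemma vbr_antisym: "vbr \<phi> x y = - vbr \<phi> y x"
proof (rule inner_eqI)
  fix K
  have "\<phi> K x \<bullet> y = - (\<phi> K y \<bullet> x)"
    by (simp add: phi_skew inner_commute[of x])
  then show "vbr \<phi> x y \<bullet> K = - vbr \<phi> y x \<bullet> K"
    by (simp add: inner_vbr_phi)
qed

lemma vbr_phi_left: "vbr \<phi> (\<phi> K x) y = - vbr \<phi> x (\<phi> K y)"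
  by (rule inner_eqI) (simp add: inner_vbr_phi phi_commute phi_skew)

lemma centre_nbr: "centre (nbr \<phi>) = {U. snd U = 0}"
proof (intro set_eqI iffI)
  fix U :: "'k \<times> 'v"
  assume "U \<in> centre (nbr \<phi>)"
  then have "vbr \<phi> (snd U) w = 0" for w
    unfolding centre_def nbr_def by (auto simp: zero_prod_def dest!: spec[of _ "(0, w)"])
  then have "\<phi> K (snd U) \<bullet> w = 0" for K w
    using inner_vbr_phi[of "snd U" w K] by simp
  then show "U \<in> {U. snd U = 0}"
    using phi_faithful_pointwise inner_eq_zero_iff by blast
qed (simp add: centre_def nbr_def vbr_def zero_prod_def)

lemma curvature_knil_conn:
  "curvature (nbr \<phi>) (knil_conn \<phi>) X Y Z = (0, \<phi> (vbr \<phi> (snd X) (snd Y)) (snd Z))"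
  by (simp add: curvature_def knil_conn_def nbr_def phi_commute)

lemma bilinear_knil_conn: "bilinear (knil_conn \<phi>)"
  unfolding bilinear_def knil_conn_def by (auto intro!: linearI simp: algebra_simps)

lemma metric_conn_knil_conn: "metric_conn (knil_conn \<phi>)"
  unfolding metric_conn_def knil_conn_def by (simp add: phi_skew)

lemma parallel21_torsion_knil_conn: "parallel21 (knil_conn \<phi>) (torsion (nbr \<phi>) (knil_conn \<phi>))"
  unfolding parallel21_def
  by (simp add: torsion_knil_conn knil_conn_def vbr_phi_left phi_commute zero_prod_def algebra_simps)

lemma parallel31_curvature_knil_conn: "parallel31 (knil_conn \<phi>) (curvature (nbr \<phi>) (knil_conn \<phi>))"
  unfolding parallel31_def
  by (simp add: curvature_knil_conn knil_conn_def vbr_phi_left phi_commute zero_prod_def algebra_simps)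

lemma parallel11_nI_knil_conn: "parallel11 (knil_conn \<phi>) (nI J)"
  unfolding parallel11_def knil_conn_def nI_def by (simp add: phi_J linear_neg[OF linear_J])

lemma knil_conn_centre: "U \<in> centre (nbr \<phi>) \<Longrightarrow> knil_conn \<phi> X U = 0"
  by (simp add: centre_nbr knil_conn_def zero_prod_def)

lemma inner_torsion_knil_conn:
  "torsion (nbr \<phi>) (knil_conn \<phi>) X Y \<bullet> Z =
     - (nbr \<phi> X Y \<bullet> Z) - (nbr \<phi> Y Z \<bullet> X) - (nbr \<phi> Z X \<bullet> Y)"
proof -
  obtain a x b y c z where "X = (a, x)" "Y = (b, y)" "Z = (c, z)"
    by (metis prod.exhaust)
  moreover have "\<phi> b z \<bullet> x = - (\<phi> b x \<bullet> z)"
    using phi_skew[of b z x] by (simp only: inner_commute[of z])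
  ultimately show ?thesis
    by (simp add: torsion_knil_conn nbr_def inner_vbr_phi inner_diff_left)
qed

lemma totally_skew_torsion_knil_conn: "totally_skew (torsion (nbr \<phi>) (knil_conn \<phi>))"
  unfolding totally_skew_def
proof (intro conjI allI)
  fix X Y Z :: "'k \<times> 'v"
  have inner_nbr_antisym: "nbr \<phi> A B \<bullet> C = - (nbr \<phi> B A \<bullet> C)" for A B C :: "'k \<times> 'v"
    using vbr_antisym[of "snd A" "snd B"] by (cases C) (simp add: nbr_def)
  show "torsion (nbr \<phi>) (knil_conn \<phi>) X Y \<bullet> Z = - (torsion (nbr \<phi>) (knil_conn \<phi>) X Z \<bullet> Y)"
    unfolding inner_torsion_knil_conn inner_nbr_antisym[of Y Z] inner_nbr_antisym[of Z X]
      inner_nbr_antisym[of X Y]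
    by simp
  show "torsion (nbr \<phi>) (knil_conn \<phi>) X Y = - torsion (nbr \<phi>) (knil_conn \<phi>) Y X"
    using vbr_antisym[of "snd X" "snd Y"] by (simp add: torsion_knil_conn)
qed

end

theorem proposition8p4:
  fixes \<phi> :: "'k::euclidean_space \<Rightarrow> 'v::euclidean_space \<Rightarrow> 'v" and J :: "'v \<Rightarrow> 'v"
  assumes "knil_abelian_datum \<phi> J"
  shows "\<exists>L :: 'k \<times> 'v \<Rightarrow> 'k \<times> 'v \<Rightarrow> 'k \<times> 'v.
           bilinear L \<and> metric_conn L \<and>
           parallel21 L (torsion (nbr \<phi>) L) \<and>
           parallel31 L (curvature (nbr \<phi>) L) \<and>
           totally_skew (torsion (nbr \<phi>) L) \<and>
           parallel11 L (nI J) \<and>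
           (\<forall>U \<in> centre (nbr \<phi>). \<forall>X. L X U = 0) \<and>
           (\<forall>X Y Z. torsion (nbr \<phi>) L X Y \<bullet> Z =
              - (nbr \<phi> X Y \<bullet> Z) - (nbr \<phi> Y Z \<bullet> X) - (nbr \<phi> Z X \<bullet> Y))"
  using assms
  by (intro exI[of _ "knil_conn \<phi>"])
    (simp add: bilinear_knil_conn metric_conn_knil_conn parallel21_torsion_knil_conn
      parallel31_curvature_knil_conn totally_skew_torsion_knil_conn parallel11_nI_knil_conn
      knil_conn_centre inner_torsion_knil_conn)

end
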